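(* Consider the system \[ x_{k+1} = x_k - \rho y_k + \hat g(y_k,w_k),\qquad y_{k+1} = (1-\beta)y_k + \hat h(y_{k-1},w_{k-1})\bigl(J(x_k)-J(x_{k-1})\bigr) \] with the setup described in the context. Then for every $k\ge1$, \[ \begin{aligned} \mathbb{E}[\tilde x_{k+1}y_{k+1}]&=-\rho(1-\beta)\mathbb{E}[y_k^2]+\mu\gamma\,\mathbb{E}[\tilde x_{k-1}^2]+\mu\gamma\frac{3\rho^2+\psi}{2}\mathbb{E}[y_{k-1}^2]-3\mu\rho\gamma\,\mathbb{E}[\tilde x_{k-1}y_{k-1}]\\ &\quad+(1-\beta-\mu\rho\gamma)\mathbb{E}[\tilde x_ky_k]+\frac{\mu\gamma\psi\varepsilon}{2}\bigl(\varepsilon+2\mathbb{E}[|y_{k-1}|]\bigr). \end{aligned} \]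
   Context: Setup. Parameters: $\rho>0$, $\beta\in(0,2)$, $\varepsilon>0$, $\omega>0$. The random variables $w_i$, $i\in\mathbb{N}\cup\{0\}$, are i.i.d., each taking the value $-\omega$ or $\omega$ with probability $1/2$. The functions $h,g:\mathbb{R}\to\mathbb{R}$ are odd, satisfy $\mathrm{sign}(g(w))=\mathrm{sign}(h(w))$ for all $w$, and $g(w)=h(w)=0$ if and only if $w=0$. Define $\hat h(y,w):=\frac{h(w)}{|y|+\varepsilon}$ and $\hat g(y,w):=(|y|+\varepsilon)g(w)$. The objective is $J(x)=J^*+\frac{\mu}{2}(x-x^* )^2$ with $\mu>0$, $x^*,J^*\in\mathbb{R}$. The initial data $x_0,y_0$ and the initialization $y_1$ (the $y$-update being applied for $k\ge1$) are deterministic. Notation: $\tilde x_k:=x_k-x^*$, $\psi:=\mathbb{E}[g(w_k)^2]$, $\gamma:=\mathbb{E}[h(w_k)g(w_k)]$. *)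

theory Defs
  imports "HOL-Probability.Probability"
begin

definition hhat :: "(real \<Rightarrow> real) \<Rightarrow> real \<Rightarrow> real \<Rightarrow> real \<Rightarrow> real" where
  "hhat h \<epsilon> y v = h v / (\<bar>y\<bar> + \<epsilon>)"

definition ghat :: "(real \<Rightarrow> real) \<Rightarrow> real \<Rightarrow> real \<Rightarrow> real \<Rightarrow> real" where
  "ghat g \<epsilon> y v = (\<bar>y\<bar> + \<epsilon>) * g v"

end

theory Submission
  imports Defs
begin

(* The noise w_i = \<plusminus>\<omega> enters the step producing x_{i+1} and y_{i+2} only through the odd
   functions g and h, and everything else in that step is determined by w_0, ..., w_{i-1}.  Since
   w_i is an independent symmetric sign, the expectation of such an expression \<Phi>(w_i) equals that
   of (\<Phi>(\<omega>) + \<Phi>(-\<omega>))/2.  Averaging over w_k removes the noise term of x_{k+1}; averaging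
   over w_{k-1} turns (x_k - xstar - \<rho> y_k) y_{k+1} into the quadratic form of the statement, with
   \<gamma> = h(\<omega>) g(\<omega>) and \<psi> = g(\<omega>)^2; the first averaging at step k-1 identifies the
   remaining cross term with E[(x_k - xstar) y_k].  All iterates are bounded, so every expectation
   involved is finite. *)

definition bounded_on :: "'a set \<Rightarrow> ('a \<Rightarrow> real) \<Rightarrow> bool" where
  "bounded_on S f \<longleftrightarrow> (\<exists>B. \<forall>s\<in>S. \<bar>f s\<bar> \<le> B)"

lemma bounded_on_const [simp]: "bounded_on S (\<lambda>s. c)"
  unfolding bounded_on_def by blast

lemma bounded_on_cong: "bounded_on S f \<Longrightarrow> (\<And>s. s \<in> S \<Longrightarrow> g s = f s) \<Longrightarrow> bounded_on S g"
  unfolding bounded_on_def by auto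

lemma bounded_on_add: "bounded_on S f \<Longrightarrow> bounded_on S g \<Longrightarrow> bounded_on S (\<lambda>s. f s + g s)"
  unfolding bounded_on_def by (fastforce intro: order.trans[OF abs_triangle_ineq] add_mono)

lemma bounded_on_diff: "bounded_on S f \<Longrightarrow> bounded_on S g \<Longrightarrow> bounded_on S (\<lambda>s. f s - g s)"
  unfolding bounded_on_def by (fastforce intro: order.trans[OF abs_triangle_ineq4] add_mono)

lemma bounded_on_mult: "bounded_on S f \<Longrightarrow> bounded_on S g \<Longrightarrow> bounded_on S (\<lambda>s. f s * g s)"
  unfolding bounded_on_def abs_mult by (fastforce intro: mult_mono)

lemma bounded_on_abs: "bounded_on S f \<Longrightarrow> bounded_on S (\<lambda>s. \<bar>f s\<bar>)"
  unfolding bounded_on_def by simp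

lemma bounded_on_power: "bounded_on S f \<Longrightarrow> bounded_on S (\<lambda>s. f s ^ n)"
  by (induction n) (simp_all add: bounded_on_mult)

lemma bounded_on_two_valued:
  "(\<And>s. s \<in> S \<Longrightarrow> f s = a \<or> f s = b) \<Longrightarrow> bounded_on S (\<lambda>s. u (f s))"
  unfolding bounded_on_def by (intro exI[of _ "\<bar>u a\<bar> + \<bar>u b\<bar>"]) force

lemma bounded_on_ghat:
  "bounded_on S f \<Longrightarrow> bounded_on S (\<lambda>s. u (v s)) \<Longrightarrow> bounded_on S (\<lambda>s. ghat u \<epsilon> (f s) (v s))"
  unfolding ghat_def by (intro bounded_on_mult bounded_on_add bounded_on_abs bounded_on_const)

lemma bounded_on_hhat:
  assumes "\<epsilon> > 0" and "bounded_on S (\<lambda>s. u (v s))"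
  shows "bounded_on S (\<lambda>s. hhat u \<epsilon> (f s) (v s))"
proof -
  obtain B where B: "\<And>s. s \<in> S \<Longrightarrow> \<bar>u (v s)\<bar> \<le> B"
    using assms(2) unfolding bounded_on_def by blast
  have "\<bar>hhat u \<epsilon> (f s) (v s)\<bar> \<le> B / \<epsilon>" if "s \<in> S" for s
  proof -
    have "\<bar>hhat u \<epsilon> (f s) (v s)\<bar> = \<bar>u (v s)\<bar> / (\<bar>f s\<bar> + \<epsilon>)"
      using assms(1) by (simp add: hhat_def)
    also have "\<dots> \<le> \<bar>u (v s)\<bar> / \<epsilon>"
      using assms(1) by (intro divide_left_mono) auto
    also have "\<dots> \<le> B / \<epsilon>"
      using assms(1) B[OF that] by (intro divide_right_mono) auto
    finally show ?thesis .
  qed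
  then show ?thesis unfolding bounded_on_def by blast
qed

lemma integrable_bounded_on:
  assumes "finite_measure M" "bounded_on (space M) f" "f \<in> borel_measurable M"
  shows "integrable M f"
proof -
  obtain B where "\<forall>s\<in>space M. \<bar>f s\<bar> \<le> B"
    using assms(2) unfolding bounded_on_def by blast
  then show ?thesis
    using assms(1,3) by (intro finite_measure.integrable_const_bound[where B = B] AE_I2) auto
qed

definition past :: "'a measure \<Rightarrow> (nat \<Rightarrow> 'a \<Rightarrow> real) \<Rightarrow> nat \<Rightarrow> 'a measure" where
  "past M w m = sigma (space M) (\<Union>i<m. {w i -` A \<inter> space M | A. A \<in> sets borel})"

lemma space_past [simp]: "space (past M w m) = space M"
  unfolding past_def by (rule space_measure_of_conv)

lemma sets_past:
  "sets (past M w m) = sigma_sets (space M) (\<Union>i<m. {w i -` A \<inter> space M | A. A \<in> sets borel})"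
  unfolding past_def by (rule sets_measure_of) auto

lemma measurable_past_w: "i < m \<Longrightarrow> w i \<in> borel_measurable (past M w m)"
  by (rule measurableI) (auto simp: sets_past)

lemma subalgebra_past:
  assumes "\<And>i. w i \<in> borel_measurable M"
  shows "subalgebra M (past M w m)"
  unfolding subalgebra_def sets_past using assms
  by (auto intro!: sets.sigma_sets_subset)

lemma measurable_past_mono:
  assumes "m \<le> n" and "f \<in> borel_measurable (past M w m)"
  shows "f \<in> borel_measurable (past M w n)"
proof (rule measurable_from_subalg[OF _ assms(2)])
  have "(\<Union>i<m. {w i -` A \<inter> space M | A. A \<in> sets borel})
      \<subseteq> (\<Union>i<n. {w i -` A \<inter> space M | A. A \<in> sets borel})"
    using assms(1) by (intro UN_mono) auto
  then show "subalgebra (past M w n) (past M w m)"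
    unfolding subalgebra_def sets_past by (simp add: sigma_sets_mono')
qed

lemma measurable_two_valued:
  fixes f :: "'a \<Rightarrow> 'b::t1_space"
  assumes "f \<in> borel_measurable N" and "\<And>s. s \<in> space N \<Longrightarrow> f s = a \<or> f s = b"
  shows "(\<lambda>s. u (f s)) \<in> borel_measurable N"
proof -
  have "(\<lambda>s. if s \<in> f -` {a} then u a else u b) \<in> borel_measurable N"
  proof (rule measurable_If_set)
    show "f -` {a} \<inter> space N \<in> sets N"
      using assms(1) by (intro measurable_sets[OF _ borel_closed]) auto
  qed (auto intro: measurable_const)
  moreover have "u (f s) = (if s \<in> f -` {a} then u a else u b)" if "s \<in> space N" for s
    using assms(2)[OF that] by auto
  ultimately show ?thesis
    by (subst measurable_cong) auto
qed

lemma (in prob_space) indep_var_past: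
  assumes indep: "indep_vars (\<lambda>_. borel) w UNIV"
    and Z: "Z \<in> borel_measurable (past M w m)"
  shows "indep_var borel Z borel (w m)"
proof -
  let ?E = "\<lambda>i. {w i -` A \<inter> space M | A. A \<in> sets borel}"
  let ?I = "\<lambda>j. case_bool {..<m} {m} j"
  have w_meas: "\<And>i. w i \<in> borel_measurable M" and indep_E: "indep_sets ?E UNIV"
    using indep by (simp_all add: indep_vars_def2)
  have "indep_sets (\<lambda>j. sigma_sets (space M) (\<Union>i\<in>?I j. ?E i)) UNIV"
  proof (rule indep_sets_collect_sigma)
    show "indep_sets ?E (\<Union>j\<in>UNIV. ?I j)"
      by (rule indep_sets_mono_index[OF _ indep_E]) auto
    show "Int_stable (?E i)" for i
    proof (rule Int_stableI)
      fix P Q assume "P \<in> ?E i" "Q \<in> ?E i"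
      then obtain A B where "A \<in> sets borel" "B \<in> sets borel"
        "P = w i -` A \<inter> space M" "Q = w i -` B \<inter> space M" by blast
      then show "P \<inter> Q \<in> ?E i"
        by (intro CollectI exI[of _ "A \<inter> B"]) auto
    qed
    show "disjoint_family_on ?I UNIV"
      by (auto simp: disjoint_family_on_def split: bool.split)
  qed
  then have "indep_sets (\<lambda>j. {case_bool Z (w m) j -` A \<inter> space M | A. A \<in> sets (case_bool borel borel j)}) UNIV"
    by (rule indep_sets_mono_sets)
       (use measurable_sets[OF Z] in \<open>auto simp: sets_past split: bool.split\<close>)
  moreover have "Z \<in> borel_measurable M"
    by (rule measurable_from_subalg[OF subalgebra_past[OF w_meas] Z])
  ultimately show ?thesis
    unfolding indep_var_def indep_vars_def2 using w_meas by (auto split: bool.split)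
qed

lemma (in prob_space) expectation_symmetric_two_point:
  fixes X :: "'a \<Rightarrow> real"
  assumes X: "X \<in> borel_measurable M"
    and vals: "\<And>s. s \<in> space M \<Longrightarrow> X s = - c \<or> X s = c"
    and half: "prob {s \<in> space M. X s = c} = 1/2"
  shows "expectation X = 0"
proof -
  define A where "A = {s \<in> space M. X s = c}"
  have A: "A \<in> events"
    unfolding A_def using X by measurable
  have "expectation X = expectation (\<lambda>s. c * (2 * indicator A s - 1))"
    using vals by (intro Bochner_Integration.integral_cong) (auto simp: A_def indicator_def)
  also have "\<dots> = c * (2 * prob A - 1)"
    using A by (simp add: prob_space integrable_real_indicator emeasure_eq_measure)
  also have "\<dots> = 0"
    using half by (simp add: A_def)
  finally show ?thesis .
qed

lemma (in prob_space) integral_average_over_sign: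
  fixes w :: "nat \<Rightarrow> 'a \<Rightarrow> real" and \<Phi> :: "'a \<Rightarrow> real \<Rightarrow> real"
  assumes indep: "indep_vars (\<lambda>_. borel) w UNIV"
    and vals: "\<And>s. s \<in> space M \<Longrightarrow> w m s = - \<omega> \<or> w m s = \<omega>"
    and half: "prob {s \<in> space M. w m s = \<omega>} = 1/2"
    and "\<omega> \<noteq> 0"
    and meas: "(\<lambda>s. \<Phi> s \<omega>) \<in> borel_measurable (past M w m)"
      "(\<lambda>s. \<Phi> s (- \<omega>)) \<in> borel_measurable (past M w m)"
    and int: "integrable M (\<lambda>s. \<Phi> s \<omega>)" "integrable M (\<lambda>s. \<Phi> s (- \<omega>))"
  shows "(\<integral>s. \<Phi> s (w m s) \<partial>M) = (\<integral>s. (\<Phi> s \<omega> + \<Phi> s (- \<omega>)) / 2 \<partial>M)"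
proof -
  \<comment> \<open>\<Phi> s (w m s) is its even part plus D s * w m s, and the latter has mean
    E[D] E[w m] = 0 by independence.\<close>
  define D where "D s = (\<Phi> s \<omega> - \<Phi> s (- \<omega>)) / (2 * \<omega>)" for s
  have w_meas: "w m \<in> borel_measurable M"
    using indep by (simp add: indep_vars_def2)
  have "D \<in> borel_measurable (past M w m)"
    unfolding D_def using meas by measurable
  then have D_indep: "indep_var borel D borel (w m)"
    by (rule indep_var_past[OF indep])
  have "integrable M D"
    unfolding D_def using int by simp
  moreover have w_int: "integrable M (w m)"
    by (intro integrable_const_bound[where B = "\<bar>\<omega>\<bar>"] AE_I2 w_meas) (auto dest: vals)
  ultimately have D_w_int: "integrable M (\<lambda>s. D s * w m s)"
    and "(\<integral>s. D s * w m s \<partial>M) = expectation D * expectation (w m)"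
    using D_indep by (simp_all add: indep_var_integrable indep_var_lebesgue_integral)
  then have D_w_zero: "(\<integral>s. D s * w m s \<partial>M) = 0"
    using expectation_symmetric_two_point[OF w_meas vals half] by simp
  have "(\<integral>s. \<Phi> s (w m s) \<partial>M) = (\<integral>s. (\<Phi> s \<omega> + \<Phi> s (- \<omega>)) / 2 + D s * w m s \<partial>M)"
    using \<open>\<omega> \<noteq> 0\<close>
    by (intro Bochner_Integration.integral_cong) (auto simp: D_def field_simps dest!: vals)
  also have "\<dots> = (\<integral>s. (\<Phi> s \<omega> + \<Phi> s (- \<omega>)) / 2 \<partial>M)"
    using int D_w_int D_w_zero by simp
  finally show ?thesis .
qed

text \<open>The two values of the two-step product, with a = x_{k-1} - xstar, b = y_{k-1},
  z = y_k, G = g(\<omega>), H = h(\<omega>), averaged over the sign of w_{k-1}.\<close>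

lemma sign_average_identity:
  fixes a b z \<rho> \<beta> \<mu> \<epsilon> G H :: real
  assumes "\<epsilon> > 0"
  defines "c \<equiv> \<bar>b\<bar> + \<epsilon>"
  shows "((a - \<rho> * b + c * G - \<rho> * z) * ((1 - \<beta>) * z + H / c * (\<mu> / 2 * ((a - \<rho> * b + c * G)\<^sup>2 - a\<^sup>2)))
        + (a - \<rho> * b - c * G - \<rho> * z) * ((1 - \<beta>) * z - H / c * (\<mu> / 2 * ((a - \<rho> * b - c * G)\<^sup>2 - a\<^sup>2)))) / 2
    = - \<rho> * (1 - \<beta>) * z\<^sup>2 + \<mu> * (H * G) * a\<^sup>2 + \<mu> * (H * G) * ((3 * \<rho>\<^sup>2 + G\<^sup>2) / 2) * b\<^sup>2
      - 3 * \<mu> * \<rho> * (H * G) * (a * b) + (1 - \<beta> - \<mu> * \<rho> * (H * G)) * ((a - \<rho> * b) * z)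
      + \<mu> * (H * G) * G\<^sup>2 * \<epsilon> / 2 * (\<epsilon> + 2 * \<bar>b\<bar>)"
    (is "?lhs = ?rhs")
proof -
  define u where "u = a - \<rho> * b"
  define q where "q = H / c * (\<mu> / 2 * (u\<^sup>2 - a\<^sup>2 + c\<^sup>2 * G\<^sup>2))"
  have "c \<noteq> 0"
    using assms(1) by (simp add: c_def add_nonneg_pos)
  then have plus: "H / c * (\<mu> / 2 * ((u + c * G)\<^sup>2 - a\<^sup>2)) = \<mu> * (H * G) * u + q"
    and minus: "H / c * (\<mu> / 2 * ((u - c * G)\<^sup>2 - a\<^sup>2)) = q - \<mu> * (H * G) * u"
    and cGq: "c * G * q = \<mu> * (H * G) / 2 * (u\<^sup>2 - a\<^sup>2 + c\<^sup>2 * G\<^sup>2)"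
    by (simp_all add: q_def field_simps power2_eq_square)
  have "?lhs = (u - \<rho> * z) * ((1 - \<beta>) * z + \<mu> * (H * G) * u) + c * G * q"
    unfolding u_def[symmetric] plus minus by (simp add: field_simps)
  also have "\<dots> = (u - \<rho> * z) * ((1 - \<beta>) * z + \<mu> * (H * G) * u)
      + \<mu> * (H * G) / 2 * (u\<^sup>2 - a\<^sup>2 + c\<^sup>2 * G\<^sup>2)"
    by (simp only: cGq)
  also have "\<dots> = ?rhs"
    unfolding u_def c_def by (simp add: power2_eq_square field_simps)
  finally show ?thesis .
qed

locale perturbed_iteration = prob_space M
  for M :: "'a measure"
    and w :: "nat \<Rightarrow> 'a \<Rightarrow> real"
    and h g J :: "real \<Rightarrow> real"
    and x y :: "nat \<Rightarrow> 'a \<Rightarrow> real"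
    and \<rho> \<beta> \<epsilon> \<omega> \<mu> xstar Jstar x0 y0 y1 :: real +
  assumes indep: "indep_vars (\<lambda>_. borel) w UNIV"
    and w_vals: "\<And>i s. s \<in> space M \<Longrightarrow> w i s = - \<omega> \<or> w i s = \<omega>"
    and w_half: "\<And>i. prob {s \<in> space M. w i s = \<omega>} = 1/2"
    and \<epsilon>_pos: "\<epsilon> > 0"
    and \<omega>_nonzero: "\<omega> \<noteq> 0"
    and h_odd: "\<And>v. h (- v) = - h v"
    and g_odd: "\<And>v. g (- v) = - g v"
    and J_quadratic: "\<And>z. J z = Jstar + \<mu> / 2 * (z - xstar)\<^sup>2"
    and x_0: "x 0 = (\<lambda>_. x0)"
    and y_0: "y 0 = (\<lambda>_. y0)"
    and y_1: "y 1 = (\<lambda>_. y1)"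
    and x_step: "\<And>n s. s \<in> space M \<Longrightarrow>
      x (Suc n) s = x n s - \<rho> * y n s + ghat g \<epsilon> (y n s) (w n s)"
    and y_step: "\<And>n s. n \<ge> 1 \<Longrightarrow> s \<in> space M \<Longrightarrow>
      y (Suc n) s = (1 - \<beta>) * y n s
        + hhat h \<epsilon> (y (n - 1) s) (w (n - 1) s) * (J (x n s) - J (x (n - 1) s))"
begin

lemma measurable_w [measurable]: "w i \<in> borel_measurable M"
  using indep by (simp add: indep_vars_def2)

lemma measurable_J [measurable]: "J \<in> borel_measurable borel"
proof -
  have "J = (\<lambda>z. Jstar + \<mu> / 2 * (z - xstar)\<^sup>2)"
    using J_quadratic by blast
  then show ?thesis by simp
qed

lemma bounded_on_J: "bounded_on S f \<Longrightarrow> bounded_on S (\<lambda>s. J (f s))"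
  unfolding J_quadratic
  by (intro bounded_on_add bounded_on_mult bounded_on_power bounded_on_diff bounded_on_const)

lemma measurable_past_comp_w:
  "i < N \<Longrightarrow> (\<lambda>s. u (w i s)) \<in> borel_measurable (past M w N)"
  by (rule measurable_two_valued[OF measurable_past_w]) (auto dest: w_vals)

text \<open>y_{n+1} involves the noise only up to w_{n-1}, so it is already measurable with respect to the
  past of w_n.\<close>

lemma measurable_past_iterates:
  "x n \<in> borel_measurable (past M w n) \<and> y n \<in> borel_measurable (past M w n)
    \<and> y (Suc n) \<in> borel_measurable (past M w n)"
proof (induction n)
  case 0
  show ?case by (simp add: x_0 y_0 y_1 flip: One_nat_def)
next
  case (Suc n)
  then have [measurable]: "x n \<in> borel_measurable (past M w (Suc n))"
      "y n \<in> borel_measurable (past M w (Suc n))"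
      "y (Suc n) \<in> borel_measurable (past M w (Suc n))"
    by (auto intro: measurable_past_mono[of n "Suc n"])
  have [measurable]: "(\<lambda>s. g (w n s)) \<in> borel_measurable (past M w (Suc n))"
      "(\<lambda>s. h (w n s)) \<in> borel_measurable (past M w (Suc n))"
    by (simp_all add: measurable_past_comp_w)
  have x_Suc [measurable]: "x (Suc n) \<in> borel_measurable (past M w (Suc n))"
  proof (subst measurable_cong)
    show "(\<lambda>s. x n s - \<rho> * y n s + ghat g \<epsilon> (y n s) (w n s)) \<in> borel_measurable (past M w (Suc n))"
      unfolding ghat_def by measurable
  qed (simp add: x_step)
  have "y (Suc (Suc n)) \<in> borel_measurable (past M w (Suc n))"
  proof (subst measurable_cong)
    show "(\<lambda>s. (1 - \<beta>) * y (Suc n) s + hhat h \<epsilon> (y n s) (w n s) * (J (x (Suc n) s) - J (x n s)))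
        \<in> borel_measurable (past M w (Suc n))"
      unfolding hhat_def by measurable
  qed (simp add: y_step)
  then show ?case using x_Suc by simp
qed

lemma measurable_iterates [measurable]:
  "x n \<in> borel_measurable M" "y n \<in> borel_measurable M"
  using measurable_past_iterates[of n]
  by (auto intro: measurable_from_subalg[OF subalgebra_past[OF measurable_w]])

lemma bounded_on_iterates:
  "bounded_on (space M) (x n) \<and> bounded_on (space M) (y n) \<and> bounded_on (space M) (y (Suc n))"
proof (induction n)
  case 0
  show ?case by (simp add: x_0 y_0 y_1 flip: One_nat_def)
next
  case (Suc n)
  then have bounded: "bounded_on (space M) (x n)" "bounded_on (space M) (y n)"
      "bounded_on (space M) (y (Suc n))" "bounded_on (space M) (\<lambda>s. g (w n s))"
      "bounded_on (space M) (\<lambda>s. h (w n s))"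
    by (auto intro: bounded_on_two_valued[OF w_vals])
  have x_Suc: "bounded_on (space M) (x (Suc n))"
    by (rule bounded_on_cong[OF _ x_step])
       (intro bounded_on_add bounded_on_diff bounded_on_mult bounded_on_ghat bounded_on_const bounded)
  have "bounded_on (space M) (y (Suc (Suc n)))"
    by (rule bounded_on_cong[OF _ y_step])
       (intro bounded_on_add bounded_on_diff bounded_on_mult bounded_on_hhat bounded_on_J
         bounded_on_const bounded x_Suc \<epsilon>_pos | simp)+
  then show ?case using x_Suc bounded by simp
qed

lemma integral_average_over_w:
  assumes "(\<lambda>s. \<Phi> s \<omega>) \<in> borel_measurable (past M w n)" "(\<lambda>s. \<Phi> s (- \<omega>)) \<in> borel_measurable (past M w n)"
    and "bounded_on (space M) (\<lambda>s. \<Phi> s \<omega>)" "bounded_on (space M) (\<lambda>s. \<Phi> s (- \<omega>))"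
  shows "(\<integral>s. \<Phi> s (w n s) \<partial>M) = (\<integral>s. (\<Phi> s \<omega> + \<Phi> s (- \<omega>)) / 2 \<partial>M)"
  using assms measurable_from_subalg[OF subalgebra_past[OF measurable_w]]
  by (intro integral_average_over_sign indep w_half \<omega>_nonzero w_vals
      integrable_bounded_on[OF finite_measure_axioms])

lemma integral_x_noise_vanishes:
  "(\<integral>s. (x (Suc n) s - xstar) * y (Suc n) s \<partial>M)
    = (\<integral>s. (x n s - xstar - \<rho> * y n s) * y (Suc n) s \<partial>M)"
proof -
  define \<Phi> where "\<Phi> s v = (x n s - xstar - \<rho> * y n s + ghat g \<epsilon> (y n s) v) * y (Suc n) s" for s v
  have [measurable]: "x n \<in> borel_measurable (past M w n)" "y n \<in> borel_measurable (past M w n)"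
      "y (Suc n) \<in> borel_measurable (past M w n)"
    using measurable_past_iterates by auto
  have "(\<integral>s. (x (Suc n) s - xstar) * y (Suc n) s \<partial>M) = (\<integral>s. \<Phi> s (w n s) \<partial>M)"
    by (intro Bochner_Integration.integral_cong) (simp_all add: \<Phi>_def x_step)
  also have "\<dots> = (\<integral>s. (\<Phi> s \<omega> + \<Phi> s (- \<omega>)) / 2 \<partial>M)"
    using bounded_on_iterates[of n]
    by (intro integral_average_over_w)
       (auto simp: \<Phi>_def ghat_def intro!: bounded_on_add bounded_on_diff bounded_on_mult bounded_on_abs)
  also have "\<dots> = (\<integral>s. (x n s - xstar - \<rho> * y n s) * y (Suc n) s \<partial>M)"
    by (intro Bochner_Integration.integral_cong) (simp_all add: \<Phi>_def ghat_def g_odd field_simps)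
  finally show ?thesis .
qed

lemma integral_y_noise_averaged:
  "(\<integral>s. (x (Suc n) s - xstar - \<rho> * y (Suc n) s) * y (Suc (Suc n)) s \<partial>M)
    = - \<rho> * (1 - \<beta>) * (\<integral>s. (y (Suc n) s)\<^sup>2 \<partial>M)
      + \<mu> * (h \<omega> * g \<omega>) * (\<integral>s. (x n s - xstar)\<^sup>2 \<partial>M)
      + \<mu> * (h \<omega> * g \<omega>) * ((3 * \<rho>\<^sup>2 + (g \<omega>)\<^sup>2) / 2) * (\<integral>s. (y n s)\<^sup>2 \<partial>M)
      - 3 * \<mu> * \<rho> * (h \<omega> * g \<omega>) * (\<integral>s. (x n s - xstar) * y n s \<partial>M)
      + (1 - \<beta> - \<mu> * \<rho> * (h \<omega> * g \<omega>)) * (\<integral>s. (x n s - xstar - \<rho> * y n s) * y (Suc n) s \<partial>M)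
      + \<mu> * (h \<omega> * g \<omega>) * (g \<omega>)\<^sup>2 * \<epsilon> / 2 * (\<epsilon> + 2 * (\<integral>s. \<bar>y n s\<bar> \<partial>M))"
    (is "_ = ?rhs")
proof -
  define \<Phi> where "\<Phi> s v = (x n s - xstar - \<rho> * y n s + ghat g \<epsilon> (y n s) v - \<rho> * y (Suc n) s)
    * ((1 - \<beta>) * y (Suc n) s
       + hhat h \<epsilon> (y n s) v * (J (x n s - \<rho> * y n s + ghat g \<epsilon> (y n s) v) - J (x n s)))" for s v
  define R where "R s = - \<rho> * (1 - \<beta>) * (y (Suc n) s)\<^sup>2
      + \<mu> * (h \<omega> * g \<omega>) * (x n s - xstar)\<^sup>2
      + \<mu> * (h \<omega> * g \<omega>) * ((3 * \<rho>\<^sup>2 + (g \<omega>)\<^sup>2) / 2) * (y n s)\<^sup>2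
      - 3 * \<mu> * \<rho> * (h \<omega> * g \<omega>) * ((x n s - xstar) * y n s)
      + (1 - \<beta> - \<mu> * \<rho> * (h \<omega> * g \<omega>)) * ((x n s - xstar - \<rho> * y n s) * y (Suc n) s)
      + \<mu> * (h \<omega> * g \<omega>) * (g \<omega>)\<^sup>2 * \<epsilon> / 2 * (\<epsilon> + 2 * \<bar>y n s\<bar>)" for s
  have [measurable]: "x n \<in> borel_measurable (past M w n)" "y n \<in> borel_measurable (past M w n)"
      "y (Suc n) \<in> borel_measurable (past M w n)"
    using measurable_past_iterates by auto
  have bounded: "bounded_on (space M) (x n)" "bounded_on (space M) (y n)" "bounded_on (space M) (y (Suc n))"
    using bounded_on_iterates by auto
  have average: "(\<Phi> s \<omega> + \<Phi> s (- \<omega>)) / 2 = R s" for s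
  proof -
    have J_diff: "J (x n s - \<rho> * y n s + c) - J (x n s)
        = \<mu> / 2 * ((x n s - xstar - \<rho> * y n s + c)\<^sup>2 - (x n s - xstar)\<^sup>2)" for c
      by (simp add: J_quadratic algebra_simps)
    show ?thesis
      unfolding \<Phi>_def R_def ghat_def hhat_def g_odd h_odd J_diff
      using sign_average_identity[OF \<epsilon>_pos, where a = "x n s - xstar" and b = "y n s" and z = "y (Suc n) s"
          and G = "g \<omega>" and H = "h \<omega>" and \<rho> = \<rho> and \<beta> = \<beta> and \<mu> = \<mu>]
      by simp
  qed
  have "(\<integral>s. (x (Suc n) s - xstar - \<rho> * y (Suc n) s) * y (Suc (Suc n)) s \<partial>M)
      = (\<integral>s. \<Phi> s (w n s) \<partial>M)"
    by (intro Bochner_Integration.integral_cong) (simp_all add: \<Phi>_def x_step y_step algebra_simps)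
  also have "\<dots> = (\<integral>s. (\<Phi> s \<omega> + \<Phi> s (- \<omega>)) / 2 \<partial>M)"
  proof (rule integral_average_over_w)
    show "(\<lambda>s. \<Phi> s \<omega>) \<in> borel_measurable (past M w n)"
      "(\<lambda>s. \<Phi> s (- \<omega>)) \<in> borel_measurable (past M w n)"
      unfolding \<Phi>_def ghat_def hhat_def by measurable
    show "bounded_on (space M) (\<lambda>s. \<Phi> s \<omega>)" "bounded_on (space M) (\<lambda>s. \<Phi> s (- \<omega>))"
      unfolding \<Phi>_def
      by (intro bounded_on_add bounded_on_diff bounded_on_mult bounded_on_ghat bounded_on_hhat
          bounded_on_J bounded_on_const bounded \<epsilon>_pos)+
  qed
  also have "\<dots> = (\<integral>s. R s \<partial>M)"
    by (simp add: average)
  also have "\<dots> = ?rhs"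
  proof -
    have "integrable M (\<lambda>s. (y (Suc n) s)\<^sup>2)" "integrable M (\<lambda>s. (x n s - xstar)\<^sup>2)"
      "integrable M (\<lambda>s. (y n s)\<^sup>2)" "integrable M (\<lambda>s. (x n s - xstar) * y n s)"
      "integrable M (\<lambda>s. (x n s - xstar - \<rho> * y n s) * y (Suc n) s)" "integrable M (\<lambda>s. \<bar>y n s\<bar>)"
      by (intro integrable_bounded_on[OF finite_measure_axioms] bounded_on_mult bounded_on_diff bounded_on_power bounded_on_abs
          bounded_on_const bounded; measurable)+
    then show ?thesis
      unfolding R_def by (simp add: prob_space)
  qed
  finally show ?thesis .
qed

lemma integral_g_w_square: "(\<integral>s. (g (w i s))\<^sup>2 \<partial>M) = (g \<omega>)\<^sup>2"
proof -
  have "(\<integral>s. (g (w i s))\<^sup>2 \<partial>M) = (\<integral>s. (g \<omega>)\<^sup>2 \<partial>M)"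
    by (intro Bochner_Integration.integral_cong) (auto simp: g_odd dest!: w_vals)
  then show ?thesis by (simp add: prob_space)
qed

lemma integral_h_g_w: "(\<integral>s. h (w i s) * g (w i s) \<partial>M) = h \<omega> * g \<omega>"
proof -
  have "(\<integral>s. h (w i s) * g (w i s) \<partial>M) = (\<integral>s. h \<omega> * g \<omega> \<partial>M)"
    by (intro Bochner_Integration.integral_cong) (auto simp: g_odd h_odd dest!: w_vals)
  then show ?thesis by (simp add: prob_space)
qed

end

theorem lemma8:
  fixes M :: "'a measure"
    and w :: "nat \<Rightarrow> 'a \<Rightarrow> real"
    and h g J :: "real \<Rightarrow> real"
    and x y :: "nat \<Rightarrow> 'a \<Rightarrow> real"
    and \<rho> \<beta> \<epsilon> \<omega> \<mu> xstar Jstar x0 y0 y1 \<psi> \<gamma> :: real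
    and k :: nat
  assumes M: "prob_space M"
    and indep: "prob_space.indep_vars M (\<lambda>_. borel) w UNIV"
    and w_vals: "\<And>i s. s \<in> space M \<Longrightarrow> w i s = - \<omega> \<or> w i s = \<omega>"
    and w_prob: "\<And>i. measure M {s \<in> space M. w i s = \<omega>} = 1/2"
    and \<rho>: "\<rho> > 0" and \<beta>: "0 < \<beta>" "\<beta> < 2" and \<epsilon>: "\<epsilon> > 0" and \<omega>: "\<omega> > 0"
    and h_odd: "\<And>v. h (- v) = - h v"
    and g_odd: "\<And>v. g (- v) = - g v"
    and sgn_hg: "\<And>v. sgn (g v) = sgn (h v)"
    and h_zero: "\<And>v. h v = 0 \<longleftrightarrow> v = 0"
    and g_zero: "\<And>v. g v = 0 \<longleftrightarrow> v = 0"
    and \<mu>: "\<mu> > 0"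
    and J_def: "\<And>z. J z = Jstar + \<mu> / 2 * (z - xstar)\<^sup>2"
    and x_0: "\<And>s. x 0 s = x0"
    and y_0: "\<And>s. y 0 s = y0"
    and y_1: "\<And>s. y 1 s = y1"
    and x_step: "\<And>n s. s \<in> space M \<Longrightarrow>
        x (Suc n) s = x n s - \<rho> * y n s + ghat g \<epsilon> (y n s) (w n s)"
    and y_step: "\<And>n s. n \<ge> 1 \<Longrightarrow> s \<in> space M \<Longrightarrow>
        y (Suc n) s = (1 - \<beta>) * y n s
          + hhat h \<epsilon> (y (n - 1) s) (w (n - 1) s) * (J (x n s) - J (x (n - 1) s))"
    and \<psi>_def: "\<And>i. \<psi> = integral\<^sup>L M (\<lambda>s. (g (w i s))\<^sup>2)"
    and \<gamma>_def: "\<And>i. \<gamma> = integral\<^sup>L M (\<lambda>s. h (w i s) * g (w i s))"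
    and k: "k \<ge> 1"
  shows "integral\<^sup>L M (\<lambda>s. (x (Suc k) s - xstar) * y (Suc k) s)
    = - \<rho> * (1 - \<beta>) * integral\<^sup>L M (\<lambda>s. (y k s)\<^sup>2)
      + \<mu> * \<gamma> * integral\<^sup>L M (\<lambda>s. (x (k - 1) s - xstar)\<^sup>2)
      + \<mu> * \<gamma> * ((3 * \<rho>\<^sup>2 + \<psi>) / 2) * integral\<^sup>L M (\<lambda>s. (y (k - 1) s)\<^sup>2)
      - 3 * \<mu> * \<rho> * \<gamma> * integral\<^sup>L M (\<lambda>s. (x (k - 1) s - xstar) * y (k - 1) s)
      + (1 - \<beta> - \<mu> * \<rho> * \<gamma>) * integral\<^sup>L M (\<lambda>s. (x k s - xstar) * y k s)
      + \<mu> * \<gamma> * \<psi> * \<epsilon> / 2 * (\<epsilon> + 2 * integral\<^sup>L M (\<lambda>s. \<bar>y (k - 1) s\<bar>))"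
proof -
  interpret perturbed_iteration M w h g J x y \<rho> \<beta> \<epsilon> \<omega> \<mu> xstar Jstar x0 y0 y1
    using M indep w_vals w_prob \<epsilon> \<omega> h_odd g_odd J_def x_0 y_0 y_1 x_step y_step
    by (intro perturbed_iteration.intro perturbed_iteration_axioms.intro) auto
  obtain j where k: "k = Suc j"
    using k by (cases k) auto
  have "\<gamma> = h \<omega> * g \<omega>" and "\<psi> = (g \<omega>)\<^sup>2"
    using \<gamma>_def[of 0] \<psi>_def[of 0] by (simp_all add: integral_h_g_w integral_g_w_square)
  then show ?thesis
    using integral_x_noise_vanishes[of k] integral_y_noise_averaged[of j] integral_x_noise_vanishes[of j]
    unfolding k by simp
qed

end
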